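(* Let $G$ be a countable connected graph. Let $X\subseteq|G|$ be a closed subspace, and let $O_1,O_2$ be disjoint open subsets of $X$ with $X=O_1\cup O_2$. Then the set of edges of $G$ with one endvertex in $O_1$ and the other in $O_2$ is finite.
   Context: Graphs may have parallel edges and loops. The space $|G|$: a ray is a one-way infinite path; two rays are edge-equivalent if for every finite set $F$ of edges some component of $G-F$ contains subrays of both; the classes are the edge-ends of $G$. View edges as copies of $[0,1]$ and let $X_G$ be the quotient obtained by identifying them at common vertices. $|G|$ has point set $X_G$ together with all edge-ends; its open sets are the unions of sets $\widetilde C$, where $C$ is a connected component of $X_G\setminus Z$ for some finite set $Z$ of inner points of edges, and $\widetilde C$ is $C$ together with all edge-ends represented by a ray in $C$. *)

theory Defs
  imports "HOL-Analysis.Analysis"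
begin

text \<open>A (multi)graph is given by a vertex set V, an edge set E and a map
  ends assigning to every edge its ordered pair of endvertices (loops: both
  components equal; parallel edges: distinct edges with the same ends).\<close>

definition is_graph :: "'v set \<Rightarrow> 'e set \<Rightarrow> ('e \<Rightarrow> 'v \<times> 'v) \<Rightarrow> bool" where
  "is_graph V E ends \<longleftrightarrow> (\<forall>e\<in>E. fst (ends e) \<in> V \<and> snd (ends e) \<in> V)"

definition adj_minus :: "'v set \<Rightarrow> 'e set \<Rightarrow> ('e \<Rightarrow> 'v \<times> 'v) \<Rightarrow> 'e set \<Rightarrow> ('v \<times> 'v) set" where
  "adj_minus V E ends F = {(x, y). \<exists>e\<in>E - F. ends e = (x, y) \<or> ends e = (y, x)}"

definition components_minus :: "'v set \<Rightarrow> 'e set \<Rightarrow> ('e \<Rightarrow> 'v \<times> 'v) \<Rightarrow> 'e set \<Rightarrow> 'v set set" where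
  "components_minus V E ends F = {{w. (v, w) \<in> (adj_minus V E ends F)\<^sup>*} | v. v \<in> V}"

definition graph_connected :: "'v set \<Rightarrow> 'e set \<Rightarrow> ('e \<Rightarrow> 'v \<times> 'v) \<Rightarrow> bool" where
  "graph_connected V E ends \<longleftrightarrow> (\<forall>u\<in>V. \<forall>v\<in>V. (u, v) \<in> (adj_minus V E ends {})\<^sup>*)"

definition is_ray :: "'v set \<Rightarrow> 'e set \<Rightarrow> ('e \<Rightarrow> 'v \<times> 'v) \<Rightarrow> (nat \<Rightarrow> 'v) \<times> (nat \<Rightarrow> 'e) \<Rightarrow> bool" where
  "is_ray V E ends R \<longleftrightarrow> inj (fst R) \<and>
     (\<forall>i. fst R i \<in> V \<and> snd R i \<in> E \<and>
          (ends (snd R i) = (fst R i, fst R (Suc i)) \<or> ends (snd R i) = (fst R (Suc i), fst R i)))"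

definition edge_equiv :: "'v set \<Rightarrow> 'e set \<Rightarrow> ('e \<Rightarrow> 'v \<times> 'v) \<Rightarrow>
    (nat \<Rightarrow> 'v) \<times> (nat \<Rightarrow> 'e) \<Rightarrow> (nat \<Rightarrow> 'v) \<times> (nat \<Rightarrow> 'e) \<Rightarrow> bool" where
  "edge_equiv V E ends R1 R2 \<longleftrightarrow>
     (\<forall>F. finite F \<longrightarrow> (\<exists>K \<in> components_minus V E ends F. \<exists>n m.
        (\<forall>i\<ge>n. fst R1 i \<in> K \<and> snd R1 i \<notin> F) \<and> (\<forall>i\<ge>m. fst R2 i \<in> K \<and> snd R2 i \<notin> F)))"

definition edge_end :: "'v set \<Rightarrow> 'e set \<Rightarrow> ('e \<Rightarrow> 'v \<times> 'v) \<Rightarrow>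
    (nat \<Rightarrow> 'v) \<times> (nat \<Rightarrow> 'e) \<Rightarrow> ((nat \<Rightarrow> 'v) \<times> (nat \<Rightarrow> 'e)) set" where
  "edge_end V E ends R = {R'. is_ray V E ends R' \<and> edge_equiv V E ends R R'}"

text \<open>Points of |G|: vertices, inner points of edges (Inner e t, 0 < t < 1), edge-ends.\<close>
datatype ('v, 'e) gpoint = Vert 'v | Inner 'e real | End "((nat \<Rightarrow> 'v) \<times> (nat \<Rightarrow> 'e)) set"

definition edge_pt :: "('e \<Rightarrow> 'v \<times> 'v) \<Rightarrow> 'e \<Rightarrow> real \<Rightarrow> ('v, 'e) gpoint" where
  "edge_pt ends e t = (if t = 0 then Vert (fst (ends e)) else if t = 1 then Vert (snd (ends e)) else Inner e t)"

definition inner_pts :: "'e set \<Rightarrow> ('v, 'e) gpoint set" where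
  "inner_pts E = {Inner e t | e t. e \<in> E \<and> 0 < t \<and> t < 1}"

definition XG_pts :: "'v set \<Rightarrow> 'e set \<Rightarrow> ('v, 'e) gpoint set" where
  "XG_pts V E = Vert ` V \<union> inner_pts E"

text \<open>The 1-complex X_G: quotient topology of the disjoint union of the edges (copies of [0,1])
  and the vertices, identified at common vertices.\<close>
definition XG :: "'v set \<Rightarrow> 'e set \<Rightarrow> ('e \<Rightarrow> 'v \<times> 'v) \<Rightarrow> ('v, 'e) gpoint topology" where
  "XG V E ends = topology (\<lambda>U. U \<subseteq> XG_pts V E \<and>
      (\<forall>e\<in>E. openin (top_of_set {0..1::real}) {t \<in> {0..1}. edge_pt ends e t \<in> U}))"

definition ray_pts :: "(nat \<Rightarrow> 'v) \<times> (nat \<Rightarrow> 'e) \<Rightarrow> ('v, 'e) gpoint set" where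
  "ray_pts R = range (\<lambda>i. Vert (fst R i)) \<union> {Inner (snd R i) t | i t. 0 < t \<and> t < 1}"

definition end_pts :: "'v set \<Rightarrow> 'e set \<Rightarrow> ('e \<Rightarrow> 'v \<times> 'v) \<Rightarrow> ('v, 'e) gpoint set" where
  "end_pts V E ends = {End (edge_end V E ends R) | R. is_ray V E ends R}"

definition tilde :: "'v set \<Rightarrow> 'e set \<Rightarrow> ('e \<Rightarrow> 'v \<times> 'v) \<Rightarrow> ('v, 'e) gpoint set \<Rightarrow> ('v, 'e) gpoint set" where
  "tilde V E ends C = C \<union> {End (edge_end V E ends R) | R. is_ray V E ends R \<and> ray_pts R \<subseteq> C}"

definition basic_open_sets :: "'v set \<Rightarrow> 'e set \<Rightarrow> ('e \<Rightarrow> 'v \<times> 'v) \<Rightarrow> ('v, 'e) gpoint set set" where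
  "basic_open_sets V E ends = {tilde V E ends C | C Z. finite Z \<and> Z \<subseteq> inner_pts E \<and>
      C \<in> connected_components_of (subtopology (XG V E ends) (XG_pts V E - Z))}"

definition Gspace :: "'v set \<Rightarrow> 'e set \<Rightarrow> ('e \<Rightarrow> 'v \<times> 'v) \<Rightarrow> ('v, 'e) gpoint topology" where
  "Gspace V E ends = topology (arbitrary union_of (\<lambda>U. U \<in> basic_open_sets V E ends))"

end

theory Submission
  imports Defs
begin

text \<open>Suppose infinitely many edges, forming a set \<open>S\<close>, join \<open>O\<^sub>1\<close> to \<open>O\<^sub>2\<close>.
  Enumerate the countable edge set and let \<open>F\<^sub>k\<close> consist of its first \<open>k\<close> edges. Since \<open>G\<close>
  is connected, \<open>G - F\<^sub>k\<close> has only finitely many components, so by pigeonhole there are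
  components \<open>K\<^sub>0 \<supseteq> K\<^sub>1 \<supseteq> \<dots>\<close> of \<open>G - F\<^sub>0, G - F\<^sub>1, \<dots>\<close> each containing an endvertex of
  infinitely many edges of \<open>S\<close>. If some vertex lies in every \<open>K\<^sub>k\<close>, let \<open>p\<close> be that vertex;
  otherwise, concatenating paths between the \<open>K\<^sub>k\<close> and cutting out the returns to earlier
  vertices gives a ray with a tail in every \<open>K\<^sub>k\<close>, and let \<open>p\<close> be its end. A basic open set
  around \<open>p\<close> comes from a component of \<open>X\<^sub>G - Z\<close>; the edges meeting the finite set \<open>Z\<close> lie in
  some \<open>F\<^sub>k\<close>, so this component contains \<open>K\<^sub>k\<close> and with it both ends of an edge of \<open>S\<close>.
  Hence every neighbourhood of \<open>p\<close> contains both ends of an edge of \<open>S\<close>. As \<open>X\<close> is closed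
  and contains all these endvertices, \<open>p \<in> X\<close>, say \<open>p \<in> O\<^sub>1\<close>; but \<open>O\<^sub>1\<close> is open in \<open>X\<close>,
  so it contains both ends of an edge of \<open>S\<close>, which is impossible.\<close>

section \<open>Walks\<close>

lemma rtrancl_exit_edge:
  assumes "(a, b) \<in> r\<^sup>*" "a \<in> A" "b \<notin> A"
  shows "\<exists>x y. (x, y) \<in> r \<and> x \<in> A \<and> y \<notin> A"
  using assms by (induction rule: rtrancl_induct) blast+

text \<open>\<open>concat_index l n = (k, j)\<close>: the \<open>n\<close>-th point of the concatenation of paths of
  lengths \<open>l 0, l 1, \<dots>\<close> (each path sharing its last point with the first point of the next)
  is the \<open>j\<close>-th point of path \<open>k\<close>.\<close>

primrec concat_index :: "(nat \<Rightarrow> nat) \<Rightarrow> nat \<Rightarrow> nat \<times> nat" where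
  "concat_index l 0 = (0, 0)"
| "concat_index l (Suc n) =
    (if snd (concat_index l n) < l (fst (concat_index l n))
     then (fst (concat_index l n), Suc (snd (concat_index l n)))
     else (Suc (fst (concat_index l n)), 0))"

lemma concat_index_le: "snd (concat_index l n) \<le> l (fst (concat_index l n))"
  by (induction n) auto

lemma concat_index_unbounded: "\<exists>N. \<forall>n\<ge>N. k \<le> fst (concat_index l n)"
proof -
  have mono: "n \<le> n' \<Longrightarrow> fst (concat_index l n) \<le> fst (concat_index l n')" for n n'
    by (rule lift_Suc_mono_le[of "\<lambda>n. fst (concat_index l n)"]) simp_all
  have run: "concat_index l n = (k, 0) \<Longrightarrow> j \<le> l k \<Longrightarrow> concat_index l (n + j) = (k, j)"
    for n k j
    by (induction j) auto
  have "\<exists>n. concat_index l n = (k, 0)"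
  proof (induction k)
    case (Suc k)
    then obtain n where "concat_index l n = (k, 0)" by blast
    then have "concat_index l (Suc (n + l k)) = (Suc k, 0)"
      using run[of n k "l k"] by simp
    then show ?case by blast
  qed (use concat_index.simps(1) in blast)
  then show ?thesis
    using mono by (metis fst_conv)
qed

lemma walk_through_chain:
  fixes a :: "nat \<Rightarrow> 'a" and R :: "nat \<Rightarrow> 'a rel"
  assumes steps: "\<And>k. (a k, a (Suc k)) \<in> (R k)\<^sup>*"
  obtains W :: "nat \<Rightarrow> 'a" and \<kappa> :: "nat \<Rightarrow> nat"
  where "\<And>n. (a (\<kappa> n), W n) \<in> (R (\<kappa> n))\<^sup>*"
    and "\<And>n. W (Suc n) = W n \<or> (W n, W (Suc n)) \<in> R (\<kappa> n)"
    and "\<And>k. \<exists>N. \<forall>n\<ge>N. k \<le> \<kappa> n"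
proof -
  have "\<forall>k. \<exists>l p. p 0 = a k \<and> p l = a (Suc k) \<and> (\<forall>i<l. (p i, p (Suc i)) \<in> R k)"
    using steps by (metis relpow_fun_conv rtrancl_power)
  then obtain l p where p0: "\<And>k. p k 0 = a k" and pl: "\<And>k. p k (l k) = a (Suc k)"
    and pstep: "\<And>k i. i < l k \<Longrightarrow> (p k i, p k (Suc i)) \<in> R k"
    by metis
  have path_reach: "j \<le> l k \<Longrightarrow> (a k, p k j) \<in> (R k)\<^sup>*" for k j
  proof (induction j)
    case (Suc j)
    then show ?case using rtrancl_into_rtrancl[OF _ pstep[of j k]] by simp
  qed (simp add: p0)
  let ?st = "concat_index l"
  show thesis
  proof
    show "(a (fst (?st n)), p (fst (?st n)) (snd (?st n))) \<in> (R (fst (?st n)))\<^sup>*" for n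
      using path_reach concat_index_le by blast
    show "p (fst (?st (Suc n))) (snd (?st (Suc n))) = p (fst (?st n)) (snd (?st n)) \<or>
        (p (fst (?st n)) (snd (?st n)), p (fst (?st (Suc n))) (snd (?st (Suc n))))
          \<in> R (fst (?st n))" for n
      using concat_index_le[of l n] by (auto simp: p0 pl pstep)
    show "\<exists>N. \<forall>n\<ge>N. k \<le> fst (?st n)" for k
      by (rule concat_index_unbounded)
  qed
qed

lemma finite_visits_escaping_walk:
  fixes W :: "nat \<Rightarrow> 'a" and \<kappa> :: "nat \<Rightarrow> nat"
  assumes W: "\<And>n. W n \<in> A (\<kappa> n)" and A: "\<And>k l. k \<le> l \<Longrightarrow> A l \<subseteq> A k"
    and \<kappa>: "\<exists>N. \<forall>n\<ge>N. k \<le> \<kappa> n" and x: "x \<notin> A k"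
  shows "finite {n. W n = x}"
proof -
  obtain N where N: "\<forall>n\<ge>N. k \<le> \<kappa> n"
    using \<kappa> by blast
  have "{n. W n = x} \<subseteq> {..<N}"
  proof
    fix n assume "n \<in> {n. W n = x}"
    then have "\<not> k \<le> \<kappa> n"
      using W A x by blast
    then show "n \<in> {..<N}"
      using N by (metis lessThan_iff not_le)
  qed
  then show ?thesis
    by (rule finite_subset) simp
qed

lemma injective_subwalk:
  fixes W :: "nat \<Rightarrow> 'a"
  assumes fin: "\<And>x. finite {n. W n = x}"
  obtains \<iota> :: "nat \<Rightarrow> nat"
  where "strict_mono \<iota>" "inj (W \<circ> \<iota>)" "\<And>m. W (\<iota> (Suc m)) = W (Suc (\<iota> m))"
proof -
  define latest where "latest x = Max {n. W n = x}" for x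
  have latest: "n \<le> latest x \<and> W (latest x) = x" if "W n = x" for n x
    using that fin[of x] Max_ge Max_in unfolding latest_def by fastforce
  \<comment> \<open>Jump to the last visit of the current vertex, then take one step of the walk.\<close>
  define \<iota> where "\<iota> = rec_nat (latest (W 0)) (\<lambda>_ i. latest (W (Suc i)))"
  have \<iota>_0: "\<iota> 0 = latest (W 0)" and \<iota>_Suc: "\<iota> (Suc m) = latest (W (Suc (\<iota> m)))" for m
    by (simp_all add: \<iota>_def)
  have \<iota>_latest: "\<iota> m = latest (W (\<iota> m))" for m
    by (cases m) (use latest in \<open>auto simp: \<iota>_0 \<iota>_Suc\<close>)
  have not_revisited: "\<iota> m < j \<Longrightarrow> W j \<noteq> W (\<iota> m)" for m j
    using latest[of j "W (\<iota> m)"] \<iota>_latest[of m] by auto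
  have \<iota>_step: "Suc (\<iota> m) \<le> \<iota> (Suc m) \<and> W (\<iota> (Suc m)) = W (Suc (\<iota> m))" for m
    using latest[of "Suc (\<iota> m)"] by (simp add: \<iota>_Suc)
  have mono: "strict_mono \<iota>"
    using \<iota>_step by (intro strict_monoI_Suc) (meson Suc_le_lessD)
  show thesis
  proof
    show "inj (W \<circ> \<iota>)"
    proof (rule injI)
      fix m m' assume "(W \<circ> \<iota>) m = (W \<circ> \<iota>) m'"
      then show "m = m'"
        using not_revisited strict_mono_less[OF mono] by (metis comp_apply linorder_neqE_nat)
    qed
  qed (use mono \<iota>_step in auto)
qed

section \<open>The 1-complex \<open>X\<^sub>G\<close> and the components of \<open>G - F\<close>\<close>

locale multigraph =
  fixes V :: "'v set" and E :: "'e set" and ends :: "'e \<Rightarrow> 'v \<times> 'v"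
  assumes graph: "is_graph V E ends"
begin

abbreviation "adj F \<equiv> adj_minus V E ends F"
abbreviation "XG_minus Z \<equiv> subtopology (XG V E ends) (XG_pts V E - Z)"
abbreviation "basic \<equiv> basic_open_sets V E ends"

lemma ends_in_V: "e \<in> E \<Longrightarrow> fst (ends e) \<in> V \<and> snd (ends e) \<in> V"
  using graph unfolding is_graph_def by blast

lemma istopology_XG: "istopology (\<lambda>U. U \<subseteq> XG_pts V E \<and>
    (\<forall>e\<in>E. openin (top_of_set {0..1::real}) {t \<in> {0..1}. edge_pt ends e t \<in> U}))"
proof -
  have Int: "{t \<in> {0..1}. edge_pt ends e t \<in> S \<inter> T} =
      {t \<in> {0..1}. edge_pt ends e t \<in> S} \<inter> {t \<in> {0..1}. edge_pt ends e t \<in> T}" for e S T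
    by auto
  have Union: "{t \<in> {0..1}. edge_pt ends e t \<in> \<Union>\<K>} =
      (\<Union>U\<in>\<K>. {t \<in> {0..1}. edge_pt ends e t \<in> U})" for e \<K>
    by auto
  show ?thesis
    unfolding istopology_def Int Union by (auto intro!: openin_Int openin_Union)
qed

lemma openin_XG: "openin (XG V E ends) U \<longleftrightarrow> U \<subseteq> XG_pts V E \<and>
    (\<forall>e\<in>E. openin (top_of_set {0..1::real}) {t \<in> {0..1}. edge_pt ends e t \<in> U})"
  unfolding XG_def using istopology_XG by simp

lemma edge_pt_in_XG_pts: "e \<in> E \<Longrightarrow> t \<in> {0..1} \<Longrightarrow> edge_pt ends e t \<in> XG_pts V E"
  using ends_in_V unfolding edge_pt_def XG_pts_def inner_pts_def by auto

lemma topspace_XG: "topspace (XG V E ends) = XG_pts V E"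
proof -
  have "{t \<in> {0..1}. edge_pt ends e t \<in> XG_pts V E} = {0..1::real}" if "e \<in> E" for e
    using edge_pt_in_XG_pts that by auto
  then have "openin (XG V E ends) (XG_pts V E)"
    unfolding openin_XG by (simp add: openin_subtopology_self)
  then show ?thesis
    by (metis openin_XG openin_subset openin_topspace subset_antisym)
qed

lemma topspace_XG_minus: "topspace (XG_minus Z) = XG_pts V E - Z"
  by (auto simp: topspace_XG)

lemma End_notin_XG_pts: "End x \<notin> XG_pts V E"
  unfolding XG_pts_def inner_pts_def by auto

lemma continuous_map_edge_pt:
  "e \<in> E \<Longrightarrow> continuous_map (top_of_set {0..1}) (XG V E ends) (edge_pt ends e)"
  unfolding continuous_map_def openin_XG topspace_XG using edge_pt_in_XG_pts by auto

definition edges_through :: "('v, 'e) gpoint set \<Rightarrow> 'e set" where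
  "edges_through Z = {e. \<exists>t. Inner e t \<in> Z}"

lemma finite_edges_through:
  assumes "finite Z" shows "finite (edges_through Z)"
proof (rule finite_surj[OF assms])
  show "edges_through Z \<subseteq> case_gpoint (\<lambda>_. undefined) (\<lambda>e _. e) (\<lambda>_. undefined) ` Z"
  proof
    fix e assume "e \<in> edges_through Z"
    then obtain t where "Inner e t \<in> Z" unfolding edges_through_def by blast
    then show "e \<in> case_gpoint (\<lambda>_. undefined) (\<lambda>e _. e) (\<lambda>_. undefined) ` Z"
      by (rule rev_image_eqI) simp
  qed
qed

lemma edges_through_subset: "Z \<subseteq> inner_pts E \<Longrightarrow> edges_through Z \<subseteq> E"
  unfolding edges_through_def inner_pts_def by auto

lemma connected_component_of_edge_pt:
  assumes Z: "Z \<subseteq> inner_pts E" and e: "e \<in> E" "e \<notin> edges_through Z" and t: "t \<in> {0..1}"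
  shows "connected_component_of (XG_minus Z) (Vert (fst (ends e))) (edge_pt ends e t)"
proof -
  let ?S = "edge_pt ends e ` {0..1}"
  have "connectedin (XG V E ends) ?S"
    by (rule connectedin_continuous_map_image[OF continuous_map_edge_pt[OF e(1)]])
      (simp add: connectedin_subtopology)
  moreover have "?S \<subseteq> XG_pts V E"
    using edge_pt_in_XG_pts[OF e(1)] by auto
  moreover have "?S \<inter> Z = {}"
    using Z e(2) by (auto simp: edge_pt_def edges_through_def inner_pts_def)
  ultimately have "connectedin (XG_minus Z) ?S"
    by (auto simp: connectedin_subtopology)
  moreover have "Vert (fst (ends e)) \<in> ?S"
    by (rule image_eqI[of _ _ 0]) (auto simp: edge_pt_def)
  ultimately show ?thesis
    unfolding connected_component_of_def using t by blast
qed

definition reach :: "'e set \<Rightarrow> 'v \<Rightarrow> 'v set" where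
  "reach F v = {w. (v, w) \<in> (adj F)\<^sup>*}"

lemma sym_adj: "sym (adj F)"
  unfolding adj_minus_def sym_def by auto

lemma adj_antimono: "F \<subseteq> F' \<Longrightarrow> adj F' \<subseteq> adj F"
  unfolding adj_minus_def by auto

lemma adj_in_V: "(x, y) \<in> adj F \<Longrightarrow> x \<in> V \<and> y \<in> V"
  unfolding adj_minus_def by (auto dest!: ends_in_V)

lemma reach_self: "v \<in> reach F v"
  unfolding reach_def by simp

lemma reach_eq: "w \<in> reach F v \<Longrightarrow> reach F w = reach F v"
  using sym_rtrancl[OF sym_adj] unfolding reach_def by (auto dest: symD intro: rtrancl_trans)

lemma reach_antimono: "F \<subseteq> F' \<Longrightarrow> reach F' v \<subseteq> reach F v"
  unfolding reach_def using rtrancl_mono[OF adj_antimono] by blast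

lemma reach_subset_V: "v \<in> V \<Longrightarrow> reach F v \<subseteq> V"
  unfolding reach_def
proof clarify
  fix w assume "(v, w) \<in> (adj F)\<^sup>*" "v \<in> V"
  then show "w \<in> V" by (induction rule: rtrancl_induct) (auto dest: adj_in_V)
qed

lemma components_minus_eq: "components_minus V E ends F = {reach F v | v. v \<in> V}"
  unfolding components_minus_def reach_def ..

lemma components_minus_reach:
  "K \<in> components_minus V E ends F \<Longrightarrow> a \<in> K \<Longrightarrow> b \<in> K \<Longrightarrow> (a, b) \<in> (adj F)\<^sup>*"
  unfolding components_minus_eq using reach_eq unfolding reach_def by blast

lemma connected_component_of_reach:
  assumes Z: "Z \<subseteq> inner_pts E" and u: "u \<in> V" and uw: "(u, w) \<in> (adj (edges_through Z))\<^sup>*"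
  shows "connected_component_of (XG_minus Z) (Vert u) (Vert w)"
  using uw
proof (induction rule: rtrancl_induct)
  case base
  show ?case
    using u Z by (auto simp: connected_component_of_refl topspace_XG XG_pts_def inner_pts_def)
next
  case (step y z)
  then obtain e where e: "e \<in> E" "e \<notin> edges_through Z" and yz: "ends e = (y, z) \<or> ends e = (z, y)"
    unfolding adj_minus_def by auto
  have "connected_component_of (XG_minus Z) (Vert (fst (ends e))) (Vert (snd (ends e)))"
    using connected_component_of_edge_pt[OF Z e, of 1] by (simp add: edge_pt_def)
  then have "connected_component_of (XG_minus Z) (Vert y) (Vert z)"
    using yz by (auto simp: connected_component_of_sym)
  then show ?case
    using step.IH connected_component_of_trans by metis
qed

lemma finite_reach_sets:
  assumes conn: "graph_connected V E ends" and F: "finite F"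
  shows "finite {reach F v | v. v \<in> V}"
proof -
  let ?P = "fst ` ends ` F \<union> snd ` ends ` F"
  \<comment> \<open>Every component other than \<open>V\<close> itself is left by an edge of \<open>F\<close>.\<close>
  have "reach F v \<in> insert V (reach F ` ?P)" if v: "v \<in> V" for v
  proof (cases "reach F v = V")
    case False
    then obtain w where w: "w \<in> V" "w \<notin> reach F v"
      using reach_subset_V[OF v] by blast
    then have "(v, w) \<in> (adj {})\<^sup>*"
      using conn v unfolding graph_connected_def by blast
    then obtain x y where xy: "(x, y) \<in> adj {}" "x \<in> reach F v" "y \<notin> reach F v"
      using rtrancl_exit_edge[of v w _ "reach F v"] w reach_self by blast
    then obtain e where e: "e \<in> E" "ends e = (x, y) \<or> ends e = (y, x)"
      unfolding adj_minus_def by auto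
    have "e \<in> F"
    proof (rule ccontr)
      assume "e \<notin> F"
      then have "(x, y) \<in> adj F" using e unfolding adj_minus_def by auto
      then show False using xy unfolding reach_def by (auto intro: rtrancl_into_rtrancl)
    qed
    then have "x \<in> ?P" using e by force
    then show ?thesis using reach_eq[OF xy(2)] by blast
  qed simp
  then have "{reach F v | v. v \<in> V} \<subseteq> insert V (reach F ` ?P)"
    by blast
  then show ?thesis
    using F by (meson finite.insertI finite_Un finite_imageI finite_subset)
qed

section \<open>Rays, edge-ends and the basic open sets of \<open>|G|\<close>\<close>

lemma ray_of_injective_walk:
  assumes inj: "inj w" and step: "\<And>m. (w m, w (Suc m)) \<in> adj (F m)"
  obtains r where "is_ray V E ends (w, r)"
proof -
  have "\<forall>m. \<exists>e. e \<in> E \<and> (ends e = (w m, w (Suc m)) \<or> ends e = (w (Suc m), w m))"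
    using step unfolding adj_minus_def by blast
  then obtain r where "\<forall>m. r m \<in> E \<and> (ends (r m) = (w m, w (Suc m)) \<or> ends (r m) = (w (Suc m), w m))"
    by (auto dest: choice)
  then have "is_ray V E ends (w, r)"
    unfolding is_ray_def using inj step[THEN adj_in_V] by simp
  then show thesis ..
qed

lemma ray_reach:
  assumes R: "is_ray V E ends R" and avoid: "\<forall>i\<ge>n. snd R i \<notin> F" and "n \<le> i"
  shows "(fst R n, fst R i) \<in> (adj F)\<^sup>*"
  using \<open>n \<le> i\<close>
proof (induction i rule: dec_induct)
  case (step i)
  have "snd R i \<in> E - F" "ends (snd R i) = (fst R i, fst R (Suc i)) \<or>
      ends (snd R i) = (fst R (Suc i), fst R i)"
    using R avoid step.hyps unfolding is_ray_def by auto
  then have "(fst R i, fst R (Suc i)) \<in> adj F"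
    unfolding adj_minus_def by blast
  then show ?case using step.IH by simp
qed simp

lemma ray_pts_subset_component:
  assumes Z: "Z \<subseteq> inner_pts E" and R: "is_ray V E ends R"
    and avoid: "\<And>i. snd R i \<notin> edges_through Z"
  shows "ray_pts R \<subseteq> connected_component_of_set (XG_minus Z) (Vert (fst R 0))"
proof -
  have "fst R 0 \<in> V" using R unfolding is_ray_def by blast
  then have vertex: "connected_component_of (XG_minus Z) (Vert (fst R 0)) (Vert (fst R i))" for i
    using connected_component_of_reach[OF Z _ ray_reach[OF R, of 0]] avoid by simp
  have inner: "connected_component_of (XG_minus Z) (Vert (fst R 0)) (Inner (snd R i) t)"
    if "0 < t" "t < 1" for i t
  proof -
    have e: "snd R i \<in> E" and ends: "ends (snd R i) = (fst R i, fst R (Suc i)) \<or>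
        ends (snd R i) = (fst R (Suc i), fst R i)"
      using R unfolding is_ray_def by blast+
    obtain j where j: "fst (ends (snd R i)) = fst R j"
      using ends by (metis fst_conv)
    have "connected_component_of (XG_minus Z) (Vert (fst (ends (snd R i)))) (Inner (snd R i) t)"
      using connected_component_of_edge_pt[OF Z e avoid, of t] that by (simp add: edge_pt_def)
    then show ?thesis
      unfolding j by (rule connected_component_of_trans[OF vertex])
  qed
  show ?thesis
    unfolding ray_pts_def using vertex inner by auto
qed

lemma ray_edges_inj: assumes R: "is_ray V E ends R" shows "inj (snd R)"
proof (rule injI)
  fix i j assume eq: "snd R i = snd R j"
  have "inj (fst R)"
    and "ends (snd R i) = (fst R i, fst R (Suc i)) \<or> ends (snd R i) = (fst R (Suc i), fst R i)"
    and "ends (snd R j) = (fst R j, fst R (Suc j)) \<or> ends (snd R j) = (fst R (Suc j), fst R j)"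
    using R unfolding is_ray_def by blast+
  then have "i = j \<or> (i = Suc j \<and> Suc i = j)"
    using eq by (auto dest: injD)
  then show "i = j" by auto
qed

lemma ray_eventually_avoids:
  assumes R: "is_ray V E ends R" and F: "finite F"
  shows "\<exists>N. \<forall>i\<ge>N. snd R i \<notin> F"
proof -
  have "finite (snd R -` F)"
    using finite_vimageI[OF F ray_edges_inj[OF R]] .
  then obtain N where "\<forall>i\<in>snd R -` F. i < N"
    using finite_nat_set_iff_bounded by blast
  then show ?thesis by (metis leD vimageI)
qed

lemma edge_equiv_refl: assumes R: "is_ray V E ends R" shows "edge_equiv V E ends R R"
  unfolding edge_equiv_def
proof (intro allI impI)
  fix F :: "'e set" assume "finite F"
  then obtain N where N: "\<forall>i\<ge>N. snd R i \<notin> F"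
    using ray_eventually_avoids[OF R] by blast
  have "reach F (fst R N) \<in> components_minus V E ends F"
    using R unfolding components_minus_eq is_ray_def by blast
  moreover have "\<forall>i\<ge>N. fst R i \<in> reach F (fst R N) \<and> snd R i \<notin> F"
    using ray_reach[OF R N] N unfolding reach_def by blast
  ultimately show "\<exists>K\<in>components_minus V E ends F. \<exists>n m.
      (\<forall>i\<ge>n. fst R i \<in> K \<and> snd R i \<notin> F) \<and> (\<forall>i\<ge>m. fst R i \<in> K \<and> snd R i \<notin> F)"
    by blast
qed

lemma edge_end_eq_imp_edge_equiv:
  "is_ray V E ends R' \<Longrightarrow> edge_end V E ends R = edge_end V E ends R' \<Longrightarrow> edge_equiv V E ends R R'"
  using edge_equiv_refl unfolding edge_end_def by blast

definition ray_tail :: "(nat \<Rightarrow> 'v) \<times> (nat \<Rightarrow> 'e) \<Rightarrow> nat \<Rightarrow> (nat \<Rightarrow> 'v) \<times> (nat \<Rightarrow> 'e)" where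
  "ray_tail R n = (\<lambda>i. fst R (i + n), \<lambda>i. snd R (i + n))"

lemma is_ray_ray_tail: "is_ray V E ends R \<Longrightarrow> is_ray V E ends (ray_tail R n)"
  unfolding is_ray_def ray_tail_def by (auto simp: inj_def) (metis add_right_cancel)

lemma edge_end_ray_tail: "edge_end V E ends (ray_tail R n) = edge_end V E ends R"
proof -
  have "(\<exists>N. \<forall>i\<ge>N. fst R (i + n) \<in> K \<and> snd R (i + n) \<notin> F) \<longleftrightarrow>
      (\<exists>N. \<forall>i\<ge>N. fst R i \<in> K \<and> snd R i \<notin> F)" for K F
    using eventually_sequentially_seg[of "\<lambda>j. fst R j \<in> K \<and> snd R j \<notin> F" n]
    unfolding eventually_sequentially by simp
  then show ?thesis
    unfolding edge_end_def edge_equiv_def ray_tail_def by simp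
qed

lemma fst_ray_tail [simp]: "fst (ray_tail R n) i = fst R (i + n)"
  by (simp add: ray_tail_def)

lemma Vert_in_ray_pts: "Vert (fst R i) \<in> ray_pts R"
  unfolding ray_pts_def by blast

lemma equivalent_rays_in_component:
  assumes Z: "finite Z" "Z \<subseteq> inner_pts E"
    and R1: "is_ray V E ends R1" and R2: "is_ray V E ends R2" and equiv: "edge_equiv V E ends R1 R2"
  obtains D n m where "D \<in> connected_components_of (XG_minus Z)"
    and "ray_pts (ray_tail R1 n) \<subseteq> D" and "\<And>i. m \<le> i \<Longrightarrow> Vert (fst R2 i) \<in> D"
proof -
  let ?F = "edges_through Z"
  obtain K n m where K: "K \<in> components_minus V E ends ?F"
    and n: "\<forall>i\<ge>n. fst R1 i \<in> K \<and> snd R1 i \<notin> ?F" and m: "\<forall>i\<ge>m. fst R2 i \<in> K \<and> snd R2 i \<notin> ?F"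
    using equiv finite_edges_through[OF Z(1)] unfolding edge_equiv_def by metis
  let ?D = "connected_component_of_set (XG_minus Z) (Vert (fst R1 n))"
  have V: "fst R1 n \<in> V" using R1 unfolding is_ray_def by blast
  then have "?D \<in> connected_components_of (XG_minus Z)"
    using Z(2) by (auto simp: connected_component_in_connected_components_of topspace_XG
        XG_pts_def inner_pts_def)
  moreover have "ray_pts (ray_tail R1 n) \<subseteq> ?D"
    using ray_pts_subset_component[OF Z(2) is_ray_ray_tail[OF R1]] n
    by (simp add: ray_tail_def)
  moreover have "Vert (fst R2 i) \<in> ?D" if "m \<le> i" for i
    using connected_component_of_reach[OF Z(2) V] components_minus_reach[OF K] n m that by auto
  ultimately show thesis ..
qed

lemma component_subset_coarser_component:
  assumes "Z1 \<subseteq> Z" and D: "D \<in> connected_components_of (XG_minus Z)"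
    and C: "C \<in> connected_components_of (XG_minus Z1)" and meet: "D \<inter> C \<noteq> {}"
  shows "D \<subseteq> C"
proof (rule connected_components_of_maximal[OF C])
  have "connectedin (XG_minus Z) D"
    using connectedin_connected_components_of[OF D] .
  then show "connectedin (XG_minus Z1) D"
    using \<open>Z1 \<subseteq> Z\<close> by (auto simp: connectedin_subtopology)
  show "\<not> disjnt C D" using meet by (auto simp: disjnt_def)
qed

lemma component_subset_XG_pts:
  "C \<in> connected_components_of (XG_minus Z) \<Longrightarrow> C \<subseteq> XG_pts V E - Z"
  using connected_components_of_subset topspace_XG_minus by metis

lemma tilde_mono: "C \<subseteq> D \<Longrightarrow> tilde V E ends C \<subseteq> tilde V E ends D"
  unfolding tilde_def by auto

lemma basic_memE:
  assumes "B \<in> basic"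
  obtains C Z where "B = tilde V E ends C" "finite Z" "Z \<subseteq> inner_pts E"
    "C \<in> connected_components_of (XG_minus Z)"
  using assms unfolding basic_open_sets_def by blast

lemma subset_tilde: "C \<subseteq> tilde V E ends C"
  unfolding tilde_def by blast

lemma tilde_memE:
  assumes "p \<in> tilde V E ends C"
  obtains "p \<in> C"
  | R where "is_ray V E ends R" "ray_pts R \<subseteq> C" "p = End (edge_end V E ends R)"
  using assms unfolding tilde_def by blast

lemma equivalent_rays_common_component:
  assumes Z: "finite Z" "Z \<subseteq> inner_pts E"
    and R1: "is_ray V E ends R1" "ray_pts R1 \<subseteq> C1"
    and R2: "is_ray V E ends R2" "ray_pts R2 \<subseteq> C2"
    and equiv: "edge_equiv V E ends R1 R2"
  obtains D where "D \<in> connected_components_of (XG_minus Z)"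
    and "End (edge_end V E ends R1) \<in> tilde V E ends D" and "D \<inter> C1 \<noteq> {}" and "D \<inter> C2 \<noteq> {}"
proof -
  obtain D n m where D: "D \<in> connected_components_of (XG_minus Z)"
    and n: "ray_pts (ray_tail R1 n) \<subseteq> D" and m: "\<And>i. m \<le> i \<Longrightarrow> Vert (fst R2 i) \<in> D"
    using equivalent_rays_in_component[OF Z R1(1) R2(1) equiv] by blast
  have "End (edge_end V E ends R1) = End (edge_end V E ends (ray_tail R1 n))"
    by (simp add: edge_end_ray_tail)
  then have "End (edge_end V E ends R1) \<in> tilde V E ends D"
    using n is_ray_ray_tail[OF R1(1)] unfolding tilde_def by blast
  moreover have "Vert (fst R1 n) \<in> D \<inter> C1"
    using n R1(2) Vert_in_ray_pts[of "ray_tail R1 n" 0] Vert_in_ray_pts[of R1 n] by auto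
  moreover have "Vert (fst R2 m) \<in> D \<inter> C2"
    using m R2(2) Vert_in_ray_pts by blast
  ultimately show thesis
    using that D by blast
qed

lemma tilde_Int_common_component:
  assumes Z1: "finite Z1" "Z1 \<subseteq> inner_pts E" and C1: "C1 \<in> connected_components_of (XG_minus Z1)"
    and Z2: "finite Z2" "Z2 \<subseteq> inner_pts E" and C2: "C2 \<in> connected_components_of (XG_minus Z2)"
    and p1: "p \<in> tilde V E ends C1" and p2: "p \<in> tilde V E ends C2"
  obtains D where "D \<in> connected_components_of (XG_minus (Z1 \<union> Z2))" "p \<in> tilde V E ends D"
    and "D \<inter> C1 \<noteq> {}" "D \<inter> C2 \<noteq> {}"
proof -
  let ?Z = "Z1 \<union> Z2"
  have C1_sub: "C1 \<subseteq> XG_pts V E - Z1" and C2_sub: "C2 \<subseteq> XG_pts V E - Z2"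
    using component_subset_XG_pts C1 C2 by blast+
  show thesis
  proof (cases "p \<in> C1")
    case True
    have "p \<in> C2"
      using p2 by (cases rule: tilde_memE) (use True C1_sub End_notin_XG_pts in blast)+
    then have "p \<in> topspace (XG_minus ?Z)"
      using True C1_sub C2_sub topspace_XG_minus by blast
    then have "connected_component_of_set (XG_minus ?Z) p \<in> connected_components_of (XG_minus ?Z)"
      and "p \<in> connected_component_of_set (XG_minus ?Z) p"
      by (simp_all add: connected_component_in_connected_components_of connected_component_of_refl)
    then show thesis
      using True \<open>p \<in> C2\<close> subset_tilde by (intro that) blast+
  next
    case False
    with p1 obtain R1 where R1: "is_ray V E ends R1" "ray_pts R1 \<subseteq> C1"
      and end1: "p = End (edge_end V E ends R1)"
      by (cases rule: tilde_memE) blast+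
    then have "p \<notin> C2" using C2_sub End_notin_XG_pts by blast
    with p2 obtain R2 where R2: "is_ray V E ends R2" "ray_pts R2 \<subseteq> C2"
      and end2: "p = End (edge_end V E ends R2)"
      by (cases rule: tilde_memE) blast+
    have equiv: "edge_equiv V E ends R1 R2"
      using edge_end_eq_imp_edge_equiv[OF R2(1)] end1 end2 by simp
    have Z: "finite ?Z" "?Z \<subseteq> inner_pts E"
      using Z1 Z2 by auto
    obtain D where "D \<in> connected_components_of (XG_minus ?Z)"
      "End (edge_end V E ends R1) \<in> tilde V E ends D" "D \<inter> C1 \<noteq> {}" "D \<inter> C2 \<noteq> {}"
      by (rule equivalent_rays_common_component[OF Z R1 R2 equiv])
    then show thesis
      using end1 by (intro that) auto
  qed
qed

lemma basic_Int_refine: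
  assumes B1: "B1 \<in> basic" and B2: "B2 \<in> basic" and p: "p \<in> B1 \<inter> B2"
  shows "\<exists>B\<in>basic. p \<in> B \<and> B \<subseteq> B1 \<inter> B2"
proof -
  obtain C1 Z1 where B1: "B1 = tilde V E ends C1" and Z1: "finite Z1" "Z1 \<subseteq> inner_pts E"
    and C1: "C1 \<in> connected_components_of (XG_minus Z1)"
    using B1 by (rule basic_memE)
  obtain C2 Z2 where B2: "B2 = tilde V E ends C2" and Z2: "finite Z2" "Z2 \<subseteq> inner_pts E"
    and C2: "C2 \<in> connected_components_of (XG_minus Z2)"
    using B2 by (rule basic_memE)
  obtain D where D: "D \<in> connected_components_of (XG_minus (Z1 \<union> Z2))" "p \<in> tilde V E ends D"
    and meet: "D \<inter> C1 \<noteq> {}" "D \<inter> C2 \<noteq> {}"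
    using tilde_Int_common_component[OF Z1 C1 Z2 C2] p B1 B2 by blast
  have "D \<subseteq> C1" "D \<subseteq> C2"
    using component_subset_coarser_component[OF _ D(1) C1 meet(1)]
      component_subset_coarser_component[OF _ D(1) C2 meet(2)] by blast+
  moreover have "tilde V E ends D \<in> basic"
    using D(1) Z1 Z2 unfolding basic_open_sets_def by blast
  ultimately show ?thesis
    using D(2) B1 B2 tilde_mono by blast
qed

lemma openin_Gspace: "openin (Gspace V E ends) U \<longleftrightarrow> (\<forall>p\<in>U. \<exists>B\<in>basic. p \<in> B \<and> B \<subseteq> U)"
proof -
  have "istopology (arbitrary union_of (\<lambda>U. U \<in> basic))"
    unfolding istopology_base_eq
  proof (intro allI impI)
    fix S T assume "S \<in> basic \<and> T \<in> basic"
    then show "(arbitrary union_of (\<lambda>U. U \<in> basic)) (S \<inter> T)"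
      unfolding arbitrary_union_of_alt using basic_Int_refine by blast
  qed
  then show ?thesis
    unfolding Gspace_def by (simp add: arbitrary_union_of_alt Bex_def)
qed

lemma tilde_component_subset_topspace:
  assumes "v \<in> V"
  shows "tilde V E ends (connected_component_of_set (XG_minus {}) (Vert v)) \<subseteq> topspace (Gspace V E ends)"
proof -
  have "connected_component_of_set (XG_minus {}) (Vert v) \<in> connected_components_of (XG_minus {})"
    using assms by (simp add: connected_component_in_connected_components_of topspace_XG XG_pts_def)
  then have "tilde V E ends (connected_component_of_set (XG_minus {}) (Vert v)) \<in> basic"
    unfolding basic_open_sets_def by blast
  then show ?thesis
    using openin_subset openin_Gspace by blast
qed

lemma Vert_in_topspace_Gspace:
  assumes "v \<in> V" shows "Vert v \<in> topspace (Gspace V E ends)"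
proof -
  have "Vert v \<in> connected_component_of_set (XG_minus {}) (Vert v)"
    using assms by (simp add: connected_component_of_refl topspace_XG XG_pts_def)
  then show ?thesis
    using tilde_component_subset_topspace[OF assms] subset_tilde by blast
qed

lemma End_in_topspace_Gspace:
  assumes R: "is_ray V E ends R" shows "End (edge_end V E ends R) \<in> topspace (Gspace V E ends)"
proof -
  let ?C = "connected_component_of_set (XG_minus {}) (Vert (fst R 0))"
  have "ray_pts R \<subseteq> ?C"
    using ray_pts_subset_component[of "{}" R] R by (simp add: edges_through_def)
  then have "End (edge_end V E ends R) \<in> tilde V E ends ?C"
    unfolding tilde_def using R by (intro UnI2 CollectI exI[of _ R]) simp
  moreover have "fst R 0 \<in> V" using R unfolding is_ray_def by blast
  ultimately show ?thesis
    using tilde_component_subset_topspace by blast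
qed

end

section \<open>A point of \<open>|G|\<close> at which infinitely many edges accumulate\<close>

locale infinite_edge_set = multigraph V E ends
  for V :: "'v set" and E :: "'e set" and ends :: "'e \<Rightarrow> 'v \<times> 'v" +
  fixes S :: "'e set"
  assumes connected: "graph_connected V E ends" and countable_E: "countable E"
    and S_subset: "S \<subseteq> E" and infinite_S: "infinite S"
begin

definition rich :: "'e set \<Rightarrow> 'v set \<Rightarrow> bool" where
  "rich F K \<longleftrightarrow> infinite {e \<in> S - F. fst (ends e) \<in> K}"

lemma rich_refine:
  assumes F': "finite F'" and "F \<subseteq> F'" and v: "v \<in> V" and rich: "rich F (reach F v)"
  shows "\<exists>v'\<in>V. reach F' v' \<subseteq> reach F v \<and> rich F' (reach F' v')"
proof -
  let ?A = "{e \<in> S - F'. fst (ends e) \<in> reach F v}"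
  let ?comp = "\<lambda>e. reach F' (fst (ends e))"
  have "?A = {e \<in> S - F. fst (ends e) \<in> reach F v} - F'"
    using \<open>F \<subseteq> F'\<close> by auto
  then have A: "infinite ?A"
    using rich F' unfolding rich_def by (simp add: Diff_infinite_finite)
  have "?comp ` ?A \<subseteq> {reach F' u | u. u \<in> V}"
    using S_subset ends_in_V by blast
  \<comment> \<open>pigeonhole over the finitely many components of \<open>G - F'\<close>\<close>
  then have "finite (?comp ` ?A)"
    using finite_reach_sets[OF connected F'] finite_subset by blast
  then obtain e0 where e0: "e0 \<in> ?A" and inf: "infinite {e \<in> ?A. ?comp e = ?comp e0}"
    using pigeonhole_infinite[OF A] by blast
  let ?v = "fst (ends e0)"
  have "?v \<in> V"
    using e0 S_subset ends_in_V by blast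
  moreover have "reach F' ?v \<subseteq> reach F v"
    using reach_antimono[OF \<open>F \<subseteq> F'\<close>] reach_eq e0 by blast
  moreover have "{e \<in> ?A. ?comp e = ?comp e0} \<subseteq> {e \<in> S - F'. fst (ends e) \<in> reach F' ?v}"
    using reach_self by blast
  then have "rich F' (reach F' ?v)"
    unfolding rich_def using inf infinite_super by blast
  ultimately show ?thesis by blast
qed

definition first_edges :: "nat \<Rightarrow> 'e set" where
  "first_edges k = from_nat_into E ` {..<k}"

lemma finite_first_edges: "finite (first_edges k)"
  unfolding first_edges_def by simp

lemma first_edges_0 [simp]: "first_edges 0 = {}"
  unfolding first_edges_def by simp

lemma first_edges_mono: "k \<le> l \<Longrightarrow> first_edges k \<subseteq> first_edges l"
  unfolding first_edges_def by auto

lemma finite_subset_first_edges: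
  assumes "finite F" "F \<subseteq> E" obtains k where "F \<subseteq> first_edges k"
proof -
  obtain k where k: "\<forall>n\<in>to_nat_on E ` F. n < k"
    using assms finite_nat_set_iff_bounded by blast
  have "F \<subseteq> first_edges k"
    unfolding first_edges_def using assms(2) countable_E k by (force intro: rev_image_eqI)
  then show thesis ..
qed

lemma nested_rich_components:
  obtains c :: "nat \<Rightarrow> 'v"
  where "\<And>k. c k \<in> V" "\<And>k. rich (first_edges k) (reach (first_edges k) (c k))"
    and "\<And>k. reach (first_edges (Suc k)) (c (Suc k)) \<subseteq> reach (first_edges k) (c k)"
proof -
  obtain e where e: "e \<in> S"
    using infinite_S by (metis finite.emptyI ex_in_conv)
  let ?v = "fst (ends e)"
  have v: "?v \<in> V"
    using e S_subset ends_in_V by blast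
  have "V \<subseteq> reach {} ?v"
    using connected v unfolding graph_connected_def reach_def by blast
  then have "reach (first_edges 0) ?v = V"
    using reach_subset_V[OF v] by auto
  moreover have "{e \<in> S. fst (ends e) \<in> V} = S"
    using S_subset ends_in_V by blast
  ultimately have start: "\<exists>v. v \<in> V \<and> rich (first_edges 0) (reach (first_edges 0) v)"
    using v infinite_S unfolding rich_def by (intro exI[of _ ?v]) simp
  have step: "\<exists>v'. (v' \<in> V \<and> rich (first_edges (Suc k)) (reach (first_edges (Suc k)) v')) \<and>
      reach (first_edges (Suc k)) v' \<subseteq> reach (first_edges k) v"
    if "v \<in> V \<and> rich (first_edges k) (reach (first_edges k) v)" for v k
    using rich_refine[of "first_edges (Suc k)" "first_edges k" v] finite_first_edges
      first_edges_mono[of k "Suc k"] that by auto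
  obtain c where c: "\<And>k. (c k \<in> V \<and> rich (first_edges k) (reach (first_edges k) (c k))) \<and>
      reach (first_edges (Suc k)) (c (Suc k)) \<subseteq> reach (first_edges k) (c k)"
    using dependent_nat_choice[of "\<lambda>k v. v \<in> V \<and> rich (first_edges k) (reach (first_edges k) v)"
        "\<lambda>k v v'. reach (first_edges (Suc k)) v' \<subseteq> reach (first_edges k) v", OF start step]
    by blast
  show thesis
    using c by (intro that) auto
qed

definition S_accumulates_at :: "('v, 'e) gpoint \<Rightarrow> bool" where
  "S_accumulates_at p \<longleftrightarrow> p \<in> topspace (Gspace V E ends) \<and>
     (\<forall>B\<in>basic. p \<in> B \<longrightarrow> (\<exists>e\<in>S. Vert (fst (ends e)) \<in> B \<and> Vert (snd (ends e)) \<in> B))"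

lemma S_accumulates_at_openin:
  assumes "S_accumulates_at p" "openin (Gspace V E ends) U" "p \<in> U"
  shows "\<exists>e\<in>S. Vert (fst (ends e)) \<in> U \<and> Vert (snd (ends e)) \<in> U"
proof -
  obtain B where "B \<in> basic" "p \<in> B" "B \<subseteq> U"
    using assms(2,3) unfolding openin_Gspace by blast
  then show ?thesis
    using assms(1) unfolding S_accumulates_at_def by blast
qed

lemma S_accumulates_at_in_closed:
  assumes p: "S_accumulates_at p" and X: "closedin (Gspace V E ends) X"
    and S_X: "\<And>e. e \<in> S \<Longrightarrow> Vert (fst (ends e)) \<in> X"
  shows "p \<in> X"
proof (rule ccontr)
  assume "p \<notin> X"
  then have "p \<in> topspace (Gspace V E ends) - X"
    using p unfolding S_accumulates_at_def by blast
  moreover have "openin (Gspace V E ends) (topspace (Gspace V E ends) - X)"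
    using X by (simp add: closedin_def)
  ultimately obtain e where "e \<in> S" "Vert (fst (ends e)) \<notin> X"
    using S_accumulates_at_openin[OF p] by blast
  then show False
    using S_X by blast
qed

lemma S_accumulates_at_openin_subtopology:
  assumes p: "S_accumulates_at p" and P: "openin (subtopology (Gspace V E ends) X) P" "p \<in> P"
    and S_X: "\<And>e. e \<in> S \<Longrightarrow> Vert (fst (ends e)) \<in> X \<and> Vert (snd (ends e)) \<in> X"
  shows "\<exists>e\<in>S. Vert (fst (ends e)) \<in> P \<and> Vert (snd (ends e)) \<in> P"
proof -
  obtain U where U: "openin (Gspace V E ends) U" "P = U \<inter> X"
    using P(1) unfolding openin_subtopology by blast
  then obtain e where "e \<in> S" "Vert (fst (ends e)) \<in> U" "Vert (snd (ends e)) \<in> U"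
    using S_accumulates_at_openin[OF p] P(2) by blast
  then show ?thesis
    using S_X U(2) by blast
qed

context
  fixes c :: "nat \<Rightarrow> 'v"
  assumes nest_in_V: "\<And>k. c k \<in> V"
    and nest_rich: "\<And>k. rich (first_edges k) (reach (first_edges k) (c k))"
    and nest_Suc: "\<And>k. reach (first_edges (Suc k)) (c (Suc k)) \<subseteq> reach (first_edges k) (c k)"
begin

abbreviation "nest k \<equiv> reach (first_edges k) (c k)"

lemma nest_antimono: "k \<le> l \<Longrightarrow> nest l \<subseteq> nest k"
  using lift_Suc_antimono_le[of "\<lambda>k. nest k"] nest_Suc by blast

lemma nest_subset_V: "nest k \<subseteq> V"
  using reach_subset_V[OF nest_in_V] .

lemma component_meeting_nest_contains_S_edge:
  assumes Z: "Z \<subseteq> inner_pts E" and C: "C \<in> connected_components_of (XG_minus Z)"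
    and k: "edges_through Z \<subseteq> first_edges k" and z: "z \<in> nest k" "Vert z \<in> C"
  shows "\<exists>e\<in>S. Vert (fst (ends e)) \<in> C \<and> Vert (snd (ends e)) \<in> C"
proof -
  obtain e where e: "e \<in> S - first_edges k" "fst (ends e) \<in> nest k"
    using not_finite_existsD[OF nest_rich[of k, unfolded rich_def]] by blast
  have zV: "z \<in> V" using z(1) nest_subset_V by blast
  have "(z, fst (ends e)) \<in> (adj (first_edges k))\<^sup>*"
    using reach_eq[OF z(1)] e(2) unfolding reach_def by blast
  then have to_fst: "(z, fst (ends e)) \<in> (adj (edges_through Z))\<^sup>*"
    using rtrancl_mono[OF adj_antimono[OF k]] by blast
  have "(fst (ends e), snd (ends e)) \<in> adj (edges_through Z)"
    using e(1) S_subset k unfolding adj_minus_def by auto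
  then have to_snd: "(z, snd (ends e)) \<in> (adj (edges_through Z))\<^sup>*"
    using to_fst by (rule rtrancl_into_rtrancl[rotated])
  have "Vert z \<in> topspace (XG_minus Z)"
    using z(2) connected_components_of_subset[OF C] by blast
  then have "Vert z \<in> connected_component_of_set (XG_minus Z) (Vert z)"
    by (metis connected_component_of_refl mem_Collect_eq)
  then have "connected_component_of_set (XG_minus Z) (Vert z) \<subseteq> C"
    using connected_components_of_maximal[OF C connectedin_connected_component_of] z(2)
    by (auto simp: disjnt_iff)
  then show ?thesis
    using connected_component_of_reach[OF Z zV] to_fst to_snd e(1) by blast
qed

lemma S_accumulates_at_Vert:
  assumes x: "x \<in> V" "\<And>k. x \<in> nest k"
  shows "S_accumulates_at (Vert x)"
  unfolding S_accumulates_at_def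
proof (intro conjI ballI impI)
  show "Vert x \<in> topspace (Gspace V E ends)"
    using Vert_in_topspace_Gspace[OF x(1)] .
  fix B assume B_basic: "B \<in> basic" and x_B: "Vert x \<in> B"
  obtain C Z where B: "B = tilde V E ends C" and Z: "finite Z" "Z \<subseteq> inner_pts E"
    and C: "C \<in> connected_components_of (XG_minus Z)"
    using B_basic by (rule basic_memE)
  have "Vert x \<in> C"
    using x_B unfolding B by (cases rule: tilde_memE) auto
  moreover obtain k where k: "edges_through Z \<subseteq> first_edges k"
    using finite_subset_first_edges finite_edges_through[OF Z(1)] edges_through_subset[OF Z(2)] .
  moreover have "C \<subseteq> B"
    unfolding B by (rule subset_tilde)
  ultimately show "\<exists>e\<in>S. Vert (fst (ends e)) \<in> B \<and> Vert (snd (ends e)) \<in> B"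
    using component_meeting_nest_contains_S_edge[OF Z(2) C k x(2)] by blast
qed

lemma ray_through_nest:
  assumes escape: "\<And>x. x \<in> V \<Longrightarrow> \<exists>k. x \<notin> nest k"
  obtains R where "is_ray V E ends R" and "\<And>k. \<exists>N. \<forall>i\<ge>N. fst R i \<in> nest k"
proof -
  \<comment> \<open>Walk through the nest; as every vertex leaves the nest, it is visited only finitely often,
    so cutting out returns to earlier vertices leaves a ray.\<close>
  have "(c k, c (Suc k)) \<in> (adj (first_edges k))\<^sup>*" for k
    using nest_Suc[of k] reach_self[of "c (Suc k)"] unfolding reach_def by blast
  then obtain W \<kappa> where W_nest: "\<And>n. (c (\<kappa> n), W n) \<in> (adj (first_edges (\<kappa> n)))\<^sup>*"
    and W_step: "\<And>n. W (Suc n) = W n \<or> (W n, W (Suc n)) \<in> adj (first_edges (\<kappa> n))"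
    and \<kappa>: "\<And>k. \<exists>N. \<forall>n\<ge>N. k \<le> \<kappa> n"
    by (rule walk_through_chain[where R = "\<lambda>k. adj (first_edges k)"]) blast
  have W_in: "W n \<in> nest (\<kappa> n)" for n
    using W_nest[of n] unfolding reach_def by blast
  have "finite {n. W n = x}" for x
  proof -
    obtain k where "x \<notin> nest k"
      using escape nest_subset_V[of 0] by blast
    then show ?thesis
      using finite_visits_escaping_walk[of W "\<lambda>k. nest k" \<kappa> k x] W_in nest_antimono \<kappa> by blast
  qed
  then obtain \<iota> where \<iota>: "strict_mono \<iota>" "inj (W \<circ> \<iota>)" "\<And>m. W (\<iota> (Suc m)) = W (Suc (\<iota> m))"
    by (rule injective_subwalk) blast
  have "(W (\<iota> m), W (\<iota> (Suc m))) \<in> adj (first_edges (\<kappa> (\<iota> m)))" for m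
  proof -
    have "W (\<iota> (Suc m)) \<noteq> W (\<iota> m)"
      using injD[OF \<iota>(2), of "Suc m" m] by auto
    then show ?thesis
      using W_step[of "\<iota> m"] \<iota>(3)[of m] by auto
  qed
  then obtain r where R: "is_ray V E ends (W \<circ> \<iota>, r)"
    using ray_of_injective_walk[OF \<iota>(2)] by (metis comp_apply)
  have "\<exists>N. \<forall>i\<ge>N. W (\<iota> i) \<in> nest k" for k
  proof -
    obtain N where "\<forall>n\<ge>N. k \<le> \<kappa> n"
      using \<kappa> by blast
    then have "\<forall>i\<ge>N. k \<le> \<kappa> (\<iota> i)"
      using strict_mono_imp_increasing[OF \<iota>(1)] order_trans by metis
    then show ?thesis
      using W_in nest_antimono by (intro exI[of _ N]) blast
  qed
  then show thesis
    using R that by simp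
qed

lemma S_accumulates_at_End:
  assumes R: "is_ray V E ends R" and tails: "\<And>k. \<exists>N. \<forall>i\<ge>N. fst R i \<in> nest k"
  shows "S_accumulates_at (End (edge_end V E ends R))"
  unfolding S_accumulates_at_def
proof (intro conjI ballI impI)
  show "End (edge_end V E ends R) \<in> topspace (Gspace V E ends)"
    using End_in_topspace_Gspace[OF R] .
  fix B assume B_basic: "B \<in> basic" and end_B: "End (edge_end V E ends R) \<in> B"
  obtain C Z where B: "B = tilde V E ends C" and Z: "finite Z" "Z \<subseteq> inner_pts E"
    and C: "C \<in> connected_components_of (XG_minus Z)"
    using B_basic by (rule basic_memE)
  obtain R' where R': "is_ray V E ends R'" "ray_pts R' \<subseteq> C"
    and ends_eq: "End (edge_end V E ends R) = End (edge_end V E ends R')"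
    using end_B unfolding B
    by (cases rule: tilde_memE) (use component_subset_XG_pts[OF C] End_notin_XG_pts in blast)+
  have "edge_equiv V E ends R' R"
    using edge_end_eq_imp_edge_equiv[OF R] ends_eq by simp
  then obtain D n m where D: "D \<in> connected_components_of (XG_minus Z)"
    and n: "ray_pts (ray_tail R' n) \<subseteq> D" and m: "\<And>i. m \<le> i \<Longrightarrow> Vert (fst R i) \<in> D"
    using equivalent_rays_in_component[OF Z R'(1) R] by blast
  have "Vert (fst R' n) \<in> D \<inter> C"
    using n R'(2) Vert_in_ray_pts[of "ray_tail R' n" 0] Vert_in_ray_pts[of R' n] by auto
  then have "D \<subseteq> C"
    using component_subset_coarser_component[OF order_refl D C] by blast
  obtain k where k: "edges_through Z \<subseteq> first_edges k"
    using finite_subset_first_edges finite_edges_through[OF Z(1)] edges_through_subset[OF Z(2)] .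
  obtain N where "\<forall>i\<ge>N. fst R i \<in> nest k"
    using tails by blast
  then have "fst R (max m N) \<in> nest k" "Vert (fst R (max m N)) \<in> C"
    using m \<open>D \<subseteq> C\<close> by auto
  moreover have "C \<subseteq> B"
    unfolding B by (rule subset_tilde)
  ultimately show "\<exists>e\<in>S. Vert (fst (ends e)) \<in> B \<and> Vert (snd (ends e)) \<in> B"
    using component_meeting_nest_contains_S_edge[OF Z(2) C k] by blast
qed

lemma S_accumulation_point_of_nest: "\<exists>p. S_accumulates_at p"
proof (cases "\<exists>x\<in>V. \<forall>k. x \<in> nest k")
  case True
  then show ?thesis using S_accumulates_at_Vert by blast
next
  case False
  then obtain R where "is_ray V E ends R" "\<And>k. \<exists>N. \<forall>i\<ge>N. fst R i \<in> nest k"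
    using ray_through_nest by blast
  then show ?thesis using S_accumulates_at_End by blast
qed

end

lemma S_accumulation_point_exists: "\<exists>p. S_accumulates_at p"
proof -
  obtain c where "\<And>k. c k \<in> V" "\<And>k. rich (first_edges k) (reach (first_edges k) (c k))"
    "\<And>k. reach (first_edges (Suc k)) (c (Suc k)) \<subseteq> reach (first_edges k) (c k)"
    by (rule nested_rich_components) blast
  then show ?thesis
    by (rule S_accumulation_point_of_nest)
qed

end

theorem lemma4p2:
  fixes V :: "'v set" and E :: "'e set" and ends :: "'e \<Rightarrow> 'v \<times> 'v"
    and X O1 O2 :: "('v, 'e) gpoint set"
  assumes "is_graph V E ends"
    and "countable V" and "countable E"
    and "graph_connected V E ends"
    and "closedin (Gspace V E ends) X"
    and "openin (subtopology (Gspace V E ends) X) O1"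
    and "openin (subtopology (Gspace V E ends) X) O2"
    and "O1 \<inter> O2 = {}"
    and "X = O1 \<union> O2"
  shows "finite {e \<in> E. (Vert (fst (ends e)) \<in> O1 \<and> Vert (snd (ends e)) \<in> O2) \<or>
                         (Vert (fst (ends e)) \<in> O2 \<and> Vert (snd (ends e)) \<in> O1)}"
    (is "finite ?S")
proof (rule ccontr)
  assume "infinite ?S"
  then interpret infinite_edge_set V E ends ?S
    using assms by unfold_locales auto
  obtain p where p: "S_accumulates_at p"
    using S_accumulation_point_exists by blast
  have S_X: "Vert (fst (ends e)) \<in> X \<and> Vert (snd (ends e)) \<in> X" if "e \<in> ?S" for e
    using that assms(9) by blast
  then have "p \<in> O1 \<or> p \<in> O2"
    using S_accumulates_at_in_closed[OF p assms(5)] assms(9) by blast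
  then obtain P where P: "P = O1 \<or> P = O2" "openin (subtopology (Gspace V E ends) X) P" "p \<in> P"
    using assms(6,7) by blast
  then obtain e where "e \<in> ?S" "Vert (fst (ends e)) \<in> P" "Vert (snd (ends e)) \<in> P"
    using S_accumulates_at_openin_subtopology[OF p P(2,3) S_X] by blast
  then show False
    using P(1) assms(8) by auto
qed

end
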